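(* Let $\gamma\in(0,1]$ with $1-2\sqrt{\log(4/\gamma)/n}>0$, let $\epsilon>0$, let $\vec Q\in\mathbb R^{n\times d}$ be fixed with $\|\vec Q\|_F\le\sqrt d\,\lambda$, let $\vec U=[\vec u_1,\dots,\vec u_n]^T$ with $\vec u_i\sim\mathcal N(0,\frac{\sigma_u^2}{n}I_d)$ independent, let $\vec w\ne 0$ be fixed, and define $\Delta_0$ by $\Delta_0\vec w^T\vec w=\vec w^T(\vec U^T\vec U+\vec U^T\vec Q+\vec Q^T\vec U)\vec w$. If $$\sigma_u\ge\frac{\sqrt{2d}\,\lambda\sqrt{\frac{\log(2/\gamma)}{n}}+\sqrt{2d\lambda^2\frac{\log(2/\gamma)}{n}+\frac{2\lambda}{\epsilon}\left(1-2\sqrt{\frac{\log(4/\gamma)}{n}}\right)}}{1-2\sqrt{\frac{\log(4/\gamma)}{n}}},$$ then with probability at least $1-\gamma$, $\frac{2\lambda}{\epsilon}\le\Delta_0\le\kappa(n,\gamma)$, where $\kappa(n,\gamma)=\sigma_u^2\left(1+2\sqrt{\frac{\log(4/\gamma)}{n}}+2\frac{\log(4/\gamma)}{n}\right)+2\sqrt{2d}\,\lambda\sigma_u\sqrt{\frac{\log(2/\gamma)}{n}}$.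
   Context: $\lambda>0$, $\sigma_u>0$; $n,d$ positive integers. *)

theory Defs
  imports "HOL-Probability.Probability"
begin

text \<open>Q is n x d given as a curried function; the random matrix U is a function on
  index pairs (i,j), i < n, j < d, living in the product measure space.\<close>

definition frob_norm :: "nat \<Rightarrow> nat \<Rightarrow> (nat \<Rightarrow> nat \<Rightarrow> real) \<Rightarrow> real" where
  "frob_norm n d Q = sqrt (\<Sum>i<n. \<Sum>j<d. (Q i j)\<^sup>2)"

text \<open>Distribution of U: all n*d entries independent N(0, sigma_u^2/n), i.e. the rows
  u_i are independent N(0, (sigma_u^2/n) I_d). Standard deviation is sigma_u / sqrt n.\<close>
definition gauss_matrix :: "nat \<Rightarrow> nat \<Rightarrow> real \<Rightarrow> (nat \<times> nat \<Rightarrow> real) measure" where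
  "gauss_matrix n d \<sigma>u =
     PiM ({..<n} \<times> {..<d}) (\<lambda>_. density lborel (normal_density 0 (\<sigma>u / sqrt (real n))))"

definition Delta0 :: "nat \<Rightarrow> nat \<Rightarrow> (nat \<Rightarrow> nat \<Rightarrow> real) \<Rightarrow> (nat \<Rightarrow> real)
                       \<Rightarrow> (nat \<times> nat \<Rightarrow> real) \<Rightarrow> real" where
  "Delta0 n d Q w U =
     (\<Sum>i<n. (\<Sum>j<d. U (i,j) * w j) * (\<Sum>j<d. U (i,j) * w j)
           + (\<Sum>j<d. U (i,j) * w j) * (\<Sum>j<d. Q i j * w j)
           + (\<Sum>j<d. Q i j * w j) * (\<Sum>j<d. U (i,j) * w j))
     / (\<Sum>j<d. w j * w j)"

definition kappa :: "nat \<Rightarrow> nat \<Rightarrow> real \<Rightarrow> real \<Rightarrow> real \<Rightarrow> real" where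
  "kappa n d lam \<sigma>u \<gamma> =
     \<sigma>u\<^sup>2 * (1 + 2 * sqrt (ln (4 / \<gamma>) / real n) + 2 * (ln (4 / \<gamma>) / real n))
     + 2 * sqrt (2 * real d) * lam * \<sigma>u * sqrt (ln (2 / \<gamma>) / real n)"

end

theory Submission
  imports Defs
begin

text \<open>Put W = |w|^2. Then Delta0 W = \<Sum>i (Uw)_i^2 + 2 \<Sum>i (Uw)_i (Qw)_i, and the entries (Uw)_i are
  independent centred normals of variance \<sigma>u^2 W / n. The first sum is therefore a scaled
  chi-square variable with n degrees of freedom, which the Laurent--Massart bounds (Chernoff's
  inequality applied to its moment generating function) confine to
  \<sigma>u^2 W (1 \<pm> 2 sqrt(x/n) + ...) with x = ln (4/\<gamma>), up to probability \<gamma>/4 on each side.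
  The cross term is a centred normal whose standard deviation is at most
  \<sigma>u W sqrt d \<lambda> / sqrt n by Cauchy--Schwarz and the Frobenius bound on Q, so the Gaussian
  tail bound exp(-u^2/(2\<tau>^2))/2 on both sides controls it up to probability \<gamma>/2. Outside
  these events the upper bound kappa is immediate, and the lower bound 2\<lambda>/\<epsilon> holds because
  the hypothesis on \<sigma>u puts it beyond the larger root of a \<sigma>^2 - 2 b \<sigma> = 2\<lambda>/\<epsilon>.\<close>

lemma ln_add_one_ge:
  fixes y :: real
  assumes "0 \<le> y"
  shows "y - y\<^sup>2 / 2 \<le> ln (1 + y)"
proof -
  define g where "g u = ln (1 + u) - u + u\<^sup>2 / 2" for u :: real
  have "g 0 \<le> g y"
  proof (rule DERIV_nonneg_imp_increasing_open[OF assms])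
    fix x :: real
    assume x: "0 < x" "x < y"
    have "DERIV g x :> 1 / (1 + x) - 1 + x"
      unfolding g_def using x by (auto intro!: derivative_eq_intros simp: power2_eq_square)
    moreover have "1 / (1 + x) - 1 + x = x\<^sup>2 / (1 + x)"
      using x by (simp add: field_simps power2_eq_square)
    ultimately show "\<exists>D. DERIV g x :> D \<and> 0 \<le> D"
      using x by auto
  qed (auto simp: g_def intro!: continuous_intros)
  then show ?thesis
    by (simp add: g_def)
qed

lemma ln_add_one_le:
  fixes y :: real
  assumes "0 \<le> y"
  shows "ln (1 + y) \<le> y * (2 + y) / (2 * (1 + y))"
proof -
  define g where "g u = u * (2 + u) / (2 * (1 + u)) - ln (1 + u)" for u :: real
  have "g 0 \<le> g y"
  proof (rule DERIV_nonneg_imp_increasing_open[OF assms])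
    fix x :: real
    assume x: "0 < x" "x < y"
    have "DERIV g x :> x\<^sup>2 / (2 * (1 + x)\<^sup>2)"
      unfolding g_def using x
      by (auto intro!: derivative_eq_intros) (simp add: divide_simps power2_eq_square; algebra)
    then show "\<exists>D. DERIV g x :> D \<and> 0 \<le> D"
      by auto
  qed (use assms in \<open>auto simp: g_def intro!: continuous_intros\<close>)
  then show ?thesis
    by (simp add: g_def)
qed

lemma quadratic_ge_of_ge_root:
  fixes a b c \<sigma> :: real
  assumes "a > 0" "b \<ge> 0" "c \<ge> 0" "(b + sqrt (b\<^sup>2 + c * a)) / a \<le> \<sigma>"
  shows "c \<le> a * \<sigma>\<^sup>2 - 2 * b * \<sigma>"
proof -
  have root: "sqrt (b\<^sup>2 + c * a) \<le> a * \<sigma> - b"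
    using assms by (simp add: field_simps)
  have "b\<^sup>2 + c * a = (sqrt (b\<^sup>2 + c * a))\<^sup>2"
    using assms by simp
  also have "\<dots> \<le> (a * \<sigma> - b)\<^sup>2"
    using root assms by (intro power_mono) simp_all
  finally have "a * c \<le> a * (a * \<sigma>\<^sup>2 - 2 * b * \<sigma>)"
    by (simp add: power2_eq_square algebra_simps)
  then show ?thesis
    using assms(1) by simp
qed

lemma sqrt_mult_eq_mult_sqrt_divide: "m > 0 \<Longrightarrow> sqrt (m * x) = m * sqrt (x / m)"
  for m x :: real
  by (simp add: real_sqrt_mult real_sqrt_divide field_simps)

lemma bounds_of_quadratic_and_cross_term:
  fixes a b c\<^sub>0 h \<sigma> W q c :: real
  assumes W: "W > 0" and a: "a > 0" and b: "b \<ge> 0" and c\<^sub>0: "c\<^sub>0 \<ge> 0"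
    and \<sigma>: "(b + sqrt (b\<^sup>2 + c\<^sub>0 * a)) / a \<le> \<sigma>"
    and q: "\<sigma>\<^sup>2 * W * a \<le> q" "q \<le> \<sigma>\<^sup>2 * W * h"
    and c: "\<bar>c\<bar> / W \<le> b * \<sigma>"
  shows "c\<^sub>0 \<le> q / W + 2 * (c / W)" and "q / W + 2 * (c / W) \<le> \<sigma>\<^sup>2 * h + 2 * b * \<sigma>"
proof -
  have quadratic: "a * \<sigma>\<^sup>2 \<le> q / W" "q / W \<le> \<sigma>\<^sup>2 * h"
    using q W by (simp_all add: field_simps)
  have cross: "- (b * \<sigma>) \<le> c / W" "c / W \<le> b * \<sigma>"
    using c W by (auto simp: abs_le_iff divide_le_eq le_divide_eq)
  have "c\<^sub>0 \<le> a * \<sigma>\<^sup>2 - 2 * b * \<sigma>"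
    by (rule quadratic_ge_of_ge_root[OF a b c\<^sub>0 \<sigma>])
  then show "c\<^sub>0 \<le> q / W + 2 * (c / W)"
    using quadratic cross by linarith
  show "q / W + 2 * (c / W) \<le> \<sigma>\<^sup>2 * h + 2 * b * \<sigma>"
    using quadratic cross by simp
qed

lemma nn_integral_normal_density_atLeast_zero:
  assumes "\<tau> > 0"
  shows "(\<integral>\<^sup>+z. ennreal (normal_density 0 \<tau> z) * indicator {0..} z \<partial>lborel) = ennreal (1 / 2)"
proof -
  let ?f = "\<lambda>z. ennreal (normal_density 0 \<tau> z)"
  define H where "H = (\<integral>\<^sup>+z. ?f z * indicator {0..} z \<partial>lborel)"
  have symmetric: "normal_density 0 \<tau> (- z) = normal_density 0 \<tau> z" for z
    by (simp add: normal_density_def)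
  have "(\<integral>\<^sup>+z. ?f z * indicator {..0} z \<partial>lborel)
      = ennreal \<bar>-1\<bar> * (\<integral>\<^sup>+z. ?f (0 + (-1) * z) * indicator {..0} (0 + (-1) * z) \<partial>lborel)"
    by (rule nn_integral_real_affine) auto
  also have "\<dots> = H"
    unfolding H_def by (simp add: symmetric) (auto intro!: nn_integral_cong split: split_indicator)
  finally have left_closed: "(\<integral>\<^sup>+z. ?f z * indicator {..0} z \<partial>lborel) = H" .
  have left_open: "(\<integral>\<^sup>+z. ?f z * indicator {..<0} z \<partial>lborel) = H"
    unfolding left_closed[symmetric]
    by (intro nn_integral_cong_AE eventually_mono[OF AE_lborel_singleton[of 0]])
       (auto split: split_indicator)
  have "1 = (\<integral>\<^sup>+z. ?f z \<partial>lborel)"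
    by (subst nn_integral_eq_integral) (use assms in auto)
  also have "\<dots> = (\<integral>\<^sup>+z. ?f z * indicator {0..} z + ?f z * indicator {..<0} z \<partial>lborel)"
    by (intro nn_integral_cong) (auto split: split_indicator)
  also have "\<dots> = H + H"
    by (subst nn_integral_add) (simp_all add: H_def[symmetric] left_open)
  finally have "H + H = 1" by simp
  then obtain h where "H = ennreal h" "h + h = 1"
    by (cases H) (auto simp flip: ennreal_plus simp: ennreal_eq_1)
  moreover from this have "h = 1 / 2"
    by simp
  ultimately show ?thesis
    unfolding H_def[symmetric] by simp
qed

context prob_space
begin

lemma distributed_lincomb_indep_normal:
  fixes X :: "'i \<Rightarrow> 'a \<Rightarrow> real"
  assumes fin: "finite K" and indep: "indep_vars (\<lambda>_. borel) X K" and s: "s > 0"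
    and normal: "\<And>k. k \<in> K \<Longrightarrow> distributed M lborel (X k) (normal_density 0 s)"
    and nonzero: "\<exists>k\<in>K. c k \<noteq> 0"
  shows "distributed M lborel (\<lambda>\<omega>. \<Sum>k\<in>K. c k * X k \<omega>)
           (normal_density 0 (s * sqrt (\<Sum>k\<in>K. (c k)\<^sup>2)))"
proof -
  define K' where "K' = {k\<in>K. c k \<noteq> 0}"
  have K': "finite K'" "K' \<noteq> {}" "K' \<subseteq> K"
    using fin nonzero by (auto simp: K'_def)
  have indep': "indep_vars (\<lambda>_. borel) (\<lambda>k \<omega>. c k * X k \<omega>) K'"
    by (rule indep_vars_compose2[OF indep_vars_subset[OF indep K'(3)]]) auto
  have scaled: "distributed M lborel (\<lambda>\<omega>. c k * X k \<omega>) (normal_density 0 (\<bar>c k\<bar> * s))"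
    if "k \<in> K'" for k
    using normal_density_affine[OF normal, of k "c k" 0] that s by (simp add: K'_def)
  have "distributed M lborel (\<lambda>\<omega>. \<Sum>k\<in>K'. c k * X k \<omega>)
      (normal_density (\<Sum>k\<in>K'. 0) (sqrt (\<Sum>k\<in>K'. (\<bar>c k\<bar> * s)\<^sup>2)))"
    by (rule sum_indep_normal[OF K'(1,2) indep']) (use s scaled in \<open>auto simp: K'_def\<close>)
  moreover have "(\<lambda>\<omega>. \<Sum>k\<in>K'. c k * X k \<omega>) = (\<lambda>\<omega>. \<Sum>k\<in>K. c k * X k \<omega>)"
    by (intro ext sum.mono_neutral_left fin) (auto simp: K'_def)
  moreover have "(\<Sum>k\<in>K'. (\<bar>c k\<bar> * s)\<^sup>2) = s\<^sup>2 * (\<Sum>k\<in>K. (c k)\<^sup>2)"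
  proof -
    have "(\<Sum>k\<in>K'. (\<bar>c k\<bar> * s)\<^sup>2) = s\<^sup>2 * (\<Sum>k\<in>K'. (c k)\<^sup>2)"
      by (simp add: sum_distrib_left power_mult_distrib mult.commute)
    also have "(\<Sum>k\<in>K'. (c k)\<^sup>2) = (\<Sum>k\<in>K. (c k)\<^sup>2)"
      by (intro sum.mono_neutral_left fin) (auto simp: K'_def)
    finally show ?thesis .
  qed
  ultimately show ?thesis
    using s by (simp add: real_sqrt_mult)
qed

lemma nn_integral_exp_sq_std_normal:
  assumes Z: "distributed M lborel Z std_normal_density" and t: "t < 1 / 2"
  shows "(\<integral>\<^sup>+\<omega>. ennreal (exp (t * (Z \<omega>)\<^sup>2)) \<partial>M) = ennreal (exp (- ln (1 - 2 * t) / 2))"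
proof -
  define r where "r = exp (- ln (1 - 2 * t) / 2)"
  have r: "r > 0" by (simp add: r_def)
  have r2: "r\<^sup>2 = 1 / (1 - 2 * t)"
    using t by (simp add: r_def power2_eq_square mult_exp_exp exp_minus inverse_eq_divide)
  \<comment> \<open>Completing the square: the tilted density is a rescaled centred normal density of deviation r.\<close>
  have tilt: "std_normal_density x * exp (t * x\<^sup>2) = r * normal_density 0 r x" for x
  proof -
    have "std_normal_density x * exp (t * x\<^sup>2) = exp (- x\<^sup>2 * (1 - 2 * t) / 2) / sqrt (2 * pi)"
      by (simp add: std_normal_density_def mult_exp_exp field_simps)
    also have "\<dots> = r * normal_density 0 r x"
    proof -
      have "r\<^sup>2 * (1 - 2 * t) = 1"
        using t by (simp add: r2)
      then show ?thesis
        using r r2 t by (simp add: normal_density_def real_sqrt_mult field_simps) algebra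
    qed
    finally show ?thesis .
  qed
  have "(\<integral>\<^sup>+\<omega>. ennreal (exp (t * (Z \<omega>)\<^sup>2)) \<partial>M)
      = (\<integral>\<^sup>+x. std_normal_density x * ennreal (exp (t * x\<^sup>2)) \<partial>lborel)"
    by (rule distributed_nn_integral[OF Z, symmetric]) simp
  also have "\<dots> = (\<integral>\<^sup>+x. ennreal r * ennreal (normal_density 0 r x) \<partial>lborel)"
    by (intro nn_integral_cong) (simp add: tilt[symmetric] r[THEN less_imp_le] flip: ennreal_mult)
  also have "\<dots> = ennreal r * (\<integral>\<^sup>+x. ennreal (normal_density 0 r x) \<partial>lborel)"
    by (rule nn_integral_cmult) simp
  also have "(\<integral>\<^sup>+x. ennreal (normal_density 0 r x) \<partial>lborel) = 1"
    by (subst nn_integral_eq_integral) (use r in auto)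
  finally show ?thesis
    by (simp add: r_def)
qed

lemma nn_integral_exp_sum_sq_std_normal:
  fixes Z :: "'i \<Rightarrow> 'a \<Rightarrow> real"
  assumes fin: "finite I" and indep: "indep_vars (\<lambda>_. borel) Z I"
    and normal: "\<And>i. i \<in> I \<Longrightarrow> distributed M lborel (Z i) std_normal_density"
    and t: "t < 1 / 2"
  shows "(\<integral>\<^sup>+\<omega>. ennreal (exp (t * (\<Sum>i\<in>I. (Z i \<omega>)\<^sup>2))) \<partial>M)
         = ennreal (exp (- real (card I) * ln (1 - 2 * t) / 2))"
proof -
  have "(\<integral>\<^sup>+\<omega>. ennreal (exp (t * (\<Sum>i\<in>I. (Z i \<omega>)\<^sup>2))) \<partial>M)
      = (\<integral>\<^sup>+\<omega>. (\<Prod>i\<in>I. ennreal (exp (t * (Z i \<omega>)\<^sup>2))) \<partial>M)"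
    by (intro nn_integral_cong) (simp add: sum_distrib_left exp_sum fin prod_ennreal)
  also have "\<dots> = (\<Prod>i\<in>I. \<integral>\<^sup>+\<omega>. ennreal (exp (t * (Z i \<omega>)\<^sup>2)) \<partial>M)"
    by (intro indep_vars_nn_integral fin indep_vars_compose2[OF indep]) auto
  also have "\<dots> = (\<Prod>i\<in>I. ennreal (exp (- ln (1 - 2 * t) / 2)))"
    by (intro prod.cong refl nn_integral_exp_sq_std_normal normal t)
  also have "\<dots> = ennreal (exp (- ln (1 - 2 * t) / 2) ^ card I)"
    by (simp add: ennreal_power)
  also have "exp (- ln (1 - 2 * t) / 2) ^ card I = exp (- real (card I) * ln (1 - 2 * t) / 2)"
    by (simp flip: exp_of_nat_mult)
  finally show ?thesis .
qed

lemma chi_square_upper_tail: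
  fixes Z :: "'i \<Rightarrow> 'a \<Rightarrow> real"
  assumes fin: "finite I" "I \<noteq> {}" and indep: "indep_vars (\<lambda>_. borel) Z I"
    and normal: "\<And>i. i \<in> I \<Longrightarrow> distributed M lborel (Z i) std_normal_density"
    and x: "x > 0"
  shows "prob {\<omega>\<in>space M. real (card I) + 2 * sqrt (real (card I) * x) + 2 * x
                            \<le> (\<Sum>i\<in>I. (Z i \<omega>)\<^sup>2)} \<le> exp (- x)"
proof -
  define m where "m = real (card I)"
  have m: "m > 0"
    using fin by (simp add: m_def card_gt_0_iff)
  define r where "r = sqrt (x / m)"
  have r: "r > 0" and x_eq: "x = m * r\<^sup>2"
    using x m by (simp_all add: r_def)
  have a_eq: "m + 2 * sqrt (m * x) + 2 * x = m * (1 + 2 * r + 2 * r\<^sup>2)"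
    using m r by (simp add: x_eq real_sqrt_mult power2_eq_square algebra_simps)
  \<comment> \<open>The Chernoff parameter t = r / (1 + 2 r) optimises the Laurent--Massart exponent.\<close>
  define t where "t = r / (1 + 2 * r)"
  have t: "t > 0" "t < 1 / 2"
    using r by (auto simp: t_def field_simps)
  have ln_t: "ln (1 - 2 * t) = - ln (1 + 2 * r)"
    using r by (simp add: t_def field_simps ln_div)
  have [measurable]: "Z i \<in> borel_measurable M" if "i \<in> I" for i
    using distributed_measurable[OF normal[OF that]] by simp
  have "emeasure M {\<omega>\<in>space M. m * (1 + 2 * r + 2 * r\<^sup>2) \<le> (\<Sum>i\<in>I. (Z i \<omega>)\<^sup>2)}
      \<le> ennreal (exp (- t * (m * (1 + 2 * r + 2 * r\<^sup>2))))
         * (\<integral>\<^sup>+\<omega>. ennreal (exp (t * (\<Sum>i\<in>I. (Z i \<omega>)\<^sup>2))) * indicator (space M) \<omega> \<partial>M)"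
    by (intro Chernoff_ineq_nn_integral_ge t) auto
  also have "\<dots> = ennreal (exp (- t * (m * (1 + 2 * r + 2 * r\<^sup>2))) * exp (- m * ln (1 - 2 * t) / 2))"
    using t by (simp add: nn_integral_exp_sum_sq_std_normal[OF fin(1) indep normal] m_def
                   flip: ennreal_mult)
  also have "\<dots> \<le> ennreal (exp (- x))"
  proof (intro ennreal_leI)
    have "m / 2 * ln (1 + 2 * r) \<le> m / 2 * (2 * r * (2 + 2 * r) / (2 * (1 + 2 * r)))"
      using ln_add_one_le[of "2 * r"] r m by (intro mult_left_mono) auto
    also have "\<dots> = t * (m * (1 + 2 * r + 2 * r\<^sup>2)) - x"
      using r by (simp add: t_def x_eq field_simps power2_eq_square)
    finally show "exp (- t * (m * (1 + 2 * r + 2 * r\<^sup>2))) * exp (- m * ln (1 - 2 * t) / 2) \<le> exp (- x)"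
      by (simp add: ln_t mult_exp_exp)
  qed
  finally have "prob {\<omega>\<in>space M. m * (1 + 2 * r + 2 * r\<^sup>2) \<le> (\<Sum>i\<in>I. (Z i \<omega>)\<^sup>2)} \<le> exp (- x)"
    by (simp add: emeasure_eq_measure)
  then show ?thesis
    by (simp only: m_def[symmetric] a_eq)
qed

lemma chi_square_lower_tail:
  fixes Z :: "'i \<Rightarrow> 'a \<Rightarrow> real"
  assumes fin: "finite I" "I \<noteq> {}" and indep: "indep_vars (\<lambda>_. borel) Z I"
    and normal: "\<And>i. i \<in> I \<Longrightarrow> distributed M lborel (Z i) std_normal_density"
    and x: "x > 0"
  shows "prob {\<omega>\<in>space M. (\<Sum>i\<in>I. (Z i \<omega>)\<^sup>2) \<le> real (card I) - 2 * sqrt (real (card I) * x)}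
         \<le> exp (- x)"
proof -
  define m where "m = real (card I)"
  have m: "m > 0"
    using fin by (simp add: m_def card_gt_0_iff)
  define r where "r = sqrt (x / m)"
  have r: "r > 0" and x_eq: "x = m * r\<^sup>2"
    using x m by (simp_all add: r_def)
  have a_eq: "m - 2 * sqrt (m * x) = m * (1 - 2 * r)"
    using m r by (simp add: x_eq real_sqrt_mult power2_eq_square algebra_simps)
  have [measurable]: "Z i \<in> borel_measurable M" if "i \<in> I" for i
    using distributed_measurable[OF normal[OF that]] by simp
  have "emeasure M {\<omega>\<in>space M. (\<Sum>i\<in>I. (Z i \<omega>)\<^sup>2) \<le> m * (1 - 2 * r)}
      \<le> ennreal (exp (r * (m * (1 - 2 * r))))
         * (\<integral>\<^sup>+\<omega>. ennreal (exp (- r * (\<Sum>i\<in>I. (Z i \<omega>)\<^sup>2))) * indicator (space M) \<omega> \<partial>M)"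
    by (intro Chernoff_ineq_nn_integral_le r) auto
  also have "\<dots> = ennreal (exp (r * (m * (1 - 2 * r))) * exp (- m * ln (1 + 2 * r) / 2))"
    using r nn_integral_exp_sum_sq_std_normal[OF fin(1) indep normal, of "- r"]
    by (simp add: m_def flip: ennreal_mult)
  also have "\<dots> \<le> ennreal (exp (- x))"
  proof (intro ennreal_leI)
    have "r * (m * (1 - 2 * r)) - m / 2 * ln (1 + 2 * r)
        \<le> r * (m * (1 - 2 * r)) - m / 2 * (2 * r - (2 * r)\<^sup>2 / 2)"
      using ln_add_one_ge[of "2 * r"] r m by (intro diff_left_mono mult_left_mono) auto
    also have "\<dots> = - x"
      by (simp add: x_eq power2_eq_square algebra_simps)
    finally show "exp (r * (m * (1 - 2 * r))) * exp (- m * ln (1 + 2 * r) / 2) \<le> exp (- x)"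
      by (simp add: mult_exp_exp)
  qed
  finally have "prob {\<omega>\<in>space M. (\<Sum>i\<in>I. (Z i \<omega>)\<^sup>2) \<le> m * (1 - 2 * r)} \<le> exp (- x)"
    by (simp add: emeasure_eq_measure)
  then show ?thesis
    by (simp only: m_def[symmetric] a_eq)
qed

lemma normal_upper_tail:
  assumes X: "distributed M lborel X (normal_density 0 \<tau>)" and \<tau>: "\<tau> > 0" and u: "u \<ge> 0"
  shows "prob {\<omega>\<in>space M. u \<le> X \<omega>} \<le> exp (- u\<^sup>2 / (2 * \<tau>\<^sup>2)) / 2"
proof -
  define E where "E = exp (- u\<^sup>2 / (2 * \<tau>\<^sup>2))"
  have E: "E > 0"
    by (simp add: E_def)
  have shifted: "normal_density 0 \<tau> (u + z) \<le> E * normal_density 0 \<tau> z" if "z \<ge> 0" for z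
  proof -
    have "- (u + z)\<^sup>2 / (2 * \<tau>\<^sup>2) = - z\<^sup>2 / (2 * \<tau>\<^sup>2) + (- u\<^sup>2 / (2 * \<tau>\<^sup>2) + - (u * z) / \<tau>\<^sup>2)"
      using \<tau> by (simp add: field_simps power2_eq_square)
    then have "normal_density 0 \<tau> (u + z) = normal_density 0 \<tau> z * (E * exp (- (u * z) / \<tau>\<^sup>2))"
      unfolding normal_density_def E_def by (simp add: mult_exp_exp)
    also have "\<dots> \<le> normal_density 0 \<tau> z * (E * 1)"
      using that u \<tau> E by (intro mult_left_mono) (auto simp: divide_nonneg_pos)
    finally show ?thesis
      by (simp add: mult.commute)
  qed
  have "emeasure M {\<omega>\<in>space M. u \<le> X \<omega>}
      = (\<integral>\<^sup>+y. ennreal (normal_density 0 \<tau> y) * indicator {u..} y \<partial>lborel)"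
    using distributed_emeasure[OF X, of "{u..}"] by (simp add: vimage_def Int_def conj_commute)
  also have "\<dots> = ennreal \<bar>1\<bar> * (\<integral>\<^sup>+z. ennreal (normal_density 0 \<tau> (u + 1 * z))
                                    * indicator {u..} (u + 1 * z) \<partial>lborel)"
    by (rule nn_integral_real_affine) auto
  also have "\<dots> = (\<integral>\<^sup>+z. ennreal (normal_density 0 \<tau> (u + z)) * indicator {0..} z \<partial>lborel)"
    by (auto intro!: nn_integral_cong split: split_indicator)
  also have "\<dots> \<le> (\<integral>\<^sup>+z. ennreal E * (ennreal (normal_density 0 \<tau> z) * indicator {0..} z) \<partial>lborel)"
    using shifted E
    by (intro nn_integral_mono) (auto split: split_indicator simp flip: ennreal_mult intro!: ennreal_leI)
  also have "\<dots> = ennreal E * ennreal (1 / 2)"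
    by (subst nn_integral_cmult) (auto simp: nn_integral_normal_density_atLeast_zero[OF \<tau>])
  also have "\<dots> = ennreal (E / 2)"
    using E by (subst ennreal_mult[symmetric]) auto
  finally show ?thesis
    using E by (simp add: E_def emeasure_eq_measure)
qed

lemma normal_abs_tail:
  assumes X: "distributed M lborel X (normal_density 0 \<tau>)" and \<tau>: "\<tau> > 0" and u: "u \<ge> 0"
  shows "prob {\<omega>\<in>space M. u \<le> \<bar>X \<omega>\<bar>} \<le> exp (- u\<^sup>2 / (2 * \<tau>\<^sup>2))"
proof -
  have minus_X: "distributed M lborel (\<lambda>\<omega>. - X \<omega>) (normal_density 0 \<tau>)"
    using normal_density_affine[OF X \<tau>, of "-1" 0] by simp
  have [measurable]: "X \<in> borel_measurable M"
    using distributed_measurable[OF X] by simp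
  have "prob {\<omega>\<in>space M. u \<le> \<bar>X \<omega>\<bar>}
      = prob ({\<omega>\<in>space M. u \<le> X \<omega>} \<union> {\<omega>\<in>space M. u \<le> - X \<omega>})"
    by (rule arg_cong[where f = prob]) auto
  also have "\<dots> \<le> prob {\<omega>\<in>space M. u \<le> X \<omega>} + prob {\<omega>\<in>space M. u \<le> - X \<omega>}"
    by (rule measure_Un_le) measurable
  also have "\<dots> \<le> exp (- u\<^sup>2 / (2 * \<tau>\<^sup>2))"
    using normal_upper_tail[OF X \<tau> u] normal_upper_tail[OF minus_X \<tau> u] by simp
  finally show ?thesis .
qed

lemma prob_ge_one_minus_union_bound:
  assumes "A \<in> events" "B \<in> events" "C \<in> events" "T \<in> events"
    and "space M - (A \<union> B \<union> C) \<subseteq> T"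
  shows "1 - (prob A + prob B + prob C) \<le> prob T"
proof -
  have "prob (A \<union> B \<union> C) \<le> prob (A \<union> B) + prob C"
    using assms by (intro measure_Un_le) auto
  moreover have "prob (A \<union> B) \<le> prob A + prob B"
    using assms by (intro measure_Un_le)
  moreover have "prob (space M - (A \<union> B \<union> C)) = 1 - prob (A \<union> B \<union> C)"
    using assms by (intro prob_compl) auto
  moreover have "prob (space M - (A \<union> B \<union> C)) \<le> prob T"
    using assms by (intro finite_measure_mono)
  ultimately show ?thesis
    by linarith
qed

end

abbreviation iid_normal :: "'i set \<Rightarrow> real \<Rightarrow> ('i \<Rightarrow> real) measure" where
  "iid_normal I s \<equiv> PiM I (\<lambda>_. density lborel (normal_density 0 s))"

lemma prob_space_iid_normal: "s > 0 \<Longrightarrow> prob_space (iid_normal I s)"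
  by (intro prob_space_PiM prob_space_normal_density)

lemma iid_normal_component_distributed:
  assumes s: "s > 0" and k: "k \<in> I"
  shows "distributed (iid_normal I s) lborel (\<lambda>U. U k) (normal_density 0 s)"
proof -
  have measurable: "(\<lambda>U. U k) \<in> borel_measurable (iid_normal I s)"
    by (metis measurable_component_singleton[OF k] measurable_cong_sets sets_density sets_lborel)
  have "distr (iid_normal I s) lborel (\<lambda>U. U k)
      = distr (iid_normal I s) (density lborel (normal_density 0 s)) (\<lambda>U. U k)"
    by (intro distr_cong) auto
  also have "\<dots> = density lborel (normal_density 0 s)"
    by (rule distr_PiM_component[OF prob_space_normal_density[OF s] k])
  finally show ?thesis
    unfolding distributed_def using measurable by simp
qed

lemma iid_normal_components_indep:
  assumes s: "s > 0" and I: "finite I" "I \<noteq> {}"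
  shows "prob_space.indep_vars (iid_normal I s) (\<lambda>_. borel) (\<lambda>k U. U k) I"
proof -
  let ?N = "density lborel (normal_density 0 s)"
  interpret prob_space "iid_normal I s"
    using s by (rule prob_space_iid_normal)
  interpret product: product_prob_space "\<lambda>_. ?N" I
    using s by (intro product_prob_spaceI prob_space_normal_density)
  have "indep_vars (\<lambda>_. ?N) (\<lambda>k U. U k) I"
  proof (subst indep_vars_iff_distr_eq_PiM'[OF I(2)])
    show "random_variable ?N (\<lambda>U. U i)" if "i \<in> I" for i
      by (rule measurable_component_singleton[OF that])
    have "distr (iid_normal I s) (iid_normal I s) (\<lambda>U. restrict U I) = iid_normal I s"
      by (rule product.distr_PiM_restrict_finite[OF I(1) subset_refl])
    also have "iid_normal I s = PiM I (\<lambda>i. distr (iid_normal I s) ?N (\<lambda>U. U i))"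
      by (auto intro!: PiM_cong distr_PiM_component[symmetric] prob_space_normal_density s)
    finally show "distr (iid_normal I s) (PiM I (\<lambda>_. ?N)) (\<lambda>U. restrict U I)
        = PiM I (\<lambda>i. distr (iid_normal I s) ?N (\<lambda>U. U i))"
      by simp
  qed
  then show ?thesis
    by (rule indep_vars_compose2[where Y = "\<lambda>_ x. x", simplified]) (rule measurable_ident_sets, simp)
qed

lemma iid_normal_lincomb_distributed:
  assumes "s > 0" "finite I" "\<exists>k\<in>I. c k \<noteq> 0"
  shows "distributed (iid_normal I s) lborel (\<lambda>U. \<Sum>k\<in>I. c k * U k)
           (normal_density 0 (s * sqrt (\<Sum>k\<in>I. (c k)\<^sup>2)))"
  using assms
  by (intro prob_space.distributed_lincomb_indep_normal prob_space_iid_normal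
        iid_normal_components_indep iid_normal_component_distributed) auto

definition mat_vec :: "nat \<Rightarrow> (nat \<times> nat \<Rightarrow> real) \<Rightarrow> (nat \<Rightarrow> real) \<Rightarrow> nat \<Rightarrow> real" where
  "mat_vec d A w i = (\<Sum>j<d. A (i, j) * w j)"

lemma Delta0_eq_mat_vec:
  "Delta0 n d Q w U
     = (\<Sum>i<n. (mat_vec d U w i)\<^sup>2) / (\<Sum>j<d. (w j)\<^sup>2)
       + 2 * ((\<Sum>i<n. mat_vec d U w i * mat_vec d (case_prod Q) w i) / (\<Sum>j<d. (w j)\<^sup>2))"
  unfolding Delta0_def mat_vec_def
  by (simp add: power2_eq_square sum.distrib sum_distrib_left add_divide_distrib mult.commute)

lemma sum_sq_mat_vec_le_frob_norm:
  "(\<Sum>i<n. (mat_vec d (case_prod Q) w i)\<^sup>2) \<le> (frob_norm n d Q)\<^sup>2 * (\<Sum>j<d. (w j)\<^sup>2)"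
proof -
  have "(\<Sum>i<n. (mat_vec d (case_prod Q) w i)\<^sup>2) \<le> (\<Sum>i<n. (\<Sum>j<d. (Q i j)\<^sup>2) * (\<Sum>j<d. (w j)\<^sup>2))"
    unfolding mat_vec_def by (intro sum_mono) (simp add: Cauchy_Schwarz_ineq_sum)
  also have "\<dots> = (frob_norm n d Q)\<^sup>2 * (\<Sum>j<d. (w j)\<^sup>2)"
    by (simp add: frob_norm_def sum_distrib_right sum_nonneg)
  finally show ?thesis .
qed

lemma frob_norm_nonneg: "frob_norm n d Q \<ge> 0"
  by (simp add: frob_norm_def sum_nonneg)

locale gauss_matrix_setting =
  fixes n d :: nat and \<sigma>u :: real and w :: "nat \<Rightarrow> real"
  assumes n_pos: "n > 0" and \<sigma>u_pos: "\<sigma>u > 0" and w_nonzero: "\<exists>j<d. w j \<noteq> 0"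
begin

abbreviation "W \<equiv> \<Sum>j<d. (w j)\<^sup>2"

definition \<tau> :: real where
  "\<tau> = \<sigma>u / sqrt (real n) * sqrt W"

sublocale prob_space "gauss_matrix n d \<sigma>u"
  unfolding gauss_matrix_def using n_pos \<sigma>u_pos by (intro prob_space_iid_normal) simp

lemma W_pos: "W > 0"
proof -
  obtain j where "j < d" "w j \<noteq> 0"
    using w_nonzero by blast
  then have "0 < (w j)\<^sup>2" "(w j)\<^sup>2 \<le> W"
    by (auto intro: member_le_sum)
  then show ?thesis
    by linarith
qed

lemma \<tau>_pos: "\<tau> > 0"
  using n_pos \<sigma>u_pos W_pos by (simp add: \<tau>_def)

lemma \<tau>_sq: "\<tau>\<^sup>2 = \<sigma>u\<^sup>2 * W / n"
  using W_pos by (simp add: \<tau>_def power_mult_distrib power_divide)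

lemma mat_vec_distributed:
  assumes i: "i < n"
  shows "distributed (gauss_matrix n d \<sigma>u) lborel (\<lambda>U. mat_vec d U w i) (normal_density 0 \<tau>)"
proof -
  define c where "c k = (if fst k = i then w (snd k) else 0)" for k :: "nat \<times> nat"
  have lincomb: "(\<Sum>k\<in>{..<n} \<times> {..<d}. c k * U k) = mat_vec d U w i" for U
  proof -
    have "(\<Sum>k\<in>{..<n} \<times> {..<d}. c k * U k) = (\<Sum>a<n. \<Sum>b<d. c (a, b) * U (a, b))"
      by (simp add: sum.cartesian_product')
    also have "\<dots> = (\<Sum>a<n. if a = i then mat_vec d U w i else 0)"
      by (intro sum.cong refl) (auto simp: c_def mat_vec_def mult.commute)
    finally show ?thesis
      using i by simp
  qed
  have coeffs: "(\<Sum>k\<in>{..<n} \<times> {..<d}. (c k)\<^sup>2) = W"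
  proof -
    have "(\<Sum>k\<in>{..<n} \<times> {..<d}. (c k)\<^sup>2) = (\<Sum>a<n. \<Sum>b<d. (c (a, b))\<^sup>2)"
      by (simp add: sum.cartesian_product')
    also have "\<dots> = (\<Sum>a<n. if a = i then W else 0)"
      by (intro sum.cong refl) (auto simp: c_def)
    finally show ?thesis
      using i by simp
  qed
  have "\<exists>k\<in>{..<n} \<times> {..<d}. c k \<noteq> 0"
    using w_nonzero i by (auto simp: c_def)
  then have "distributed (iid_normal ({..<n} \<times> {..<d}) (\<sigma>u / sqrt (real n))) lborel
      (\<lambda>U. \<Sum>k\<in>{..<n} \<times> {..<d}. c k * U k)
      (normal_density 0 (\<sigma>u / sqrt (real n) * sqrt (\<Sum>k\<in>{..<n} \<times> {..<d}. (c k)\<^sup>2)))"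
    using n_pos \<sigma>u_pos by (intro iid_normal_lincomb_distributed) auto
  then show ?thesis
    unfolding gauss_matrix_def lincomb coeffs \<tau>_def .
qed

lemma mat_vec_measurable[measurable]:
  "i < n \<Longrightarrow> (\<lambda>U. mat_vec d U w i) \<in> borel_measurable (gauss_matrix n d \<sigma>u)"
  using distributed_measurable[OF mat_vec_distributed] by simp

lemma mat_vec_indep: "indep_vars (\<lambda>_. borel) (\<lambda>i U. mat_vec d U w i) {..<n}"
proof -
  have coords: "indep_vars (\<lambda>_. borel) (\<lambda>k U. U k) ({..<n} \<times> {..<d})"
    unfolding gauss_matrix_def
    using n_pos \<sigma>u_pos w_nonzero by (intro iid_normal_components_indep) auto
  \<comment> \<open>Row i of U only involves the coordinates in the block {i} \<times> {..<d}.\<close>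
  have "indep_vars (\<lambda>i. PiM ({i} \<times> {..<d}) (\<lambda>_. borel)) (\<lambda>i U. restrict U ({i} \<times> {..<d})) {..<n}"
    by (rule indep_vars_restrict[OF coords]) (auto simp: disjoint_family_on_def)
  then have "indep_vars (\<lambda>_. borel) (\<lambda>i U. mat_vec d (restrict U ({i} \<times> {..<d})) w i) {..<n}"
    by (rule indep_vars_compose2) (simp add: mat_vec_def)
  moreover have "mat_vec d (restrict U ({i} \<times> {..<d})) w i = mat_vec d U w i" for i U
    by (simp add: mat_vec_def)
  ultimately show ?thesis
    by simp
qed

lemma standardized_mat_vec_distributed:
  "i < n \<Longrightarrow> distributed (gauss_matrix n d \<sigma>u) lborel (\<lambda>U. mat_vec d U w i / \<tau>) std_normal_density"
  using normal_standard_normal_convert[OF \<tau>_pos] mat_vec_distributed by simp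

lemma standardized_mat_vec_indep: "indep_vars (\<lambda>_. borel) (\<lambda>i U. mat_vec d U w i / \<tau>) {..<n}"
  by (rule indep_vars_compose2[OF mat_vec_indep, where Y = "\<lambda>_ y. y / \<tau>", simplified]) simp

lemma sum_sq_mat_vec_eq: "(\<Sum>i<n. (mat_vec d U w i)\<^sup>2) = \<tau>\<^sup>2 * (\<Sum>i<n. (mat_vec d U w i / \<tau>)\<^sup>2)"
  using \<tau>_pos by (simp add: power_divide flip: sum_divide_distrib)

lemma sum_sq_mat_vec_upper_tail:
  assumes x: "x > 0"
  shows "prob {U\<in>space (gauss_matrix n d \<sigma>u).
            \<sigma>u\<^sup>2 * W * (1 + 2 * sqrt (x / n) + 2 * (x / n)) \<le> (\<Sum>i<n. (mat_vec d U w i)\<^sup>2)}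
         \<le> exp (- x)"
proof -
  have "\<sigma>u\<^sup>2 * W * (1 + 2 * sqrt (x / n) + 2 * (x / n)) = \<tau>\<^sup>2 * (n + 2 * sqrt (n * x) + 2 * x)"
    unfolding sqrt_mult_eq_mult_sqrt_divide[OF of_nat_0_less_iff[THEN iffD2, OF n_pos]] \<tau>_sq
    using n_pos by (simp add: field_simps)
  then have "{U\<in>space (gauss_matrix n d \<sigma>u).
              \<sigma>u\<^sup>2 * W * (1 + 2 * sqrt (x / n) + 2 * (x / n)) \<le> (\<Sum>i<n. (mat_vec d U w i)\<^sup>2)}
      = {U\<in>space (gauss_matrix n d \<sigma>u).
              n + 2 * sqrt (n * x) + 2 * x \<le> (\<Sum>i<n. (mat_vec d U w i / \<tau>)\<^sup>2)}"
    using \<tau>_pos by (simp only: sum_sq_mat_vec_eq mult_le_cancel_left_pos zero_less_power)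
  also have "prob \<dots> \<le> exp (- x)"
    using chi_square_upper_tail[OF finite_lessThan _ standardized_mat_vec_indep
                                standardized_mat_vec_distributed x] n_pos
    by (simp add: lessThan_empty_iff)
  finally show ?thesis .
qed

lemma sum_sq_mat_vec_lower_tail:
  assumes x: "x > 0"
  shows "prob {U\<in>space (gauss_matrix n d \<sigma>u).
            (\<Sum>i<n. (mat_vec d U w i)\<^sup>2) \<le> \<sigma>u\<^sup>2 * W * (1 - 2 * sqrt (x / n))}
         \<le> exp (- x)"
proof -
  have "\<sigma>u\<^sup>2 * W * (1 - 2 * sqrt (x / n)) = \<tau>\<^sup>2 * (n - 2 * sqrt (n * x))"
    unfolding sqrt_mult_eq_mult_sqrt_divide[OF of_nat_0_less_iff[THEN iffD2, OF n_pos]] \<tau>_sq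
    using n_pos by (simp add: field_simps)
  then have "{U\<in>space (gauss_matrix n d \<sigma>u).
              (\<Sum>i<n. (mat_vec d U w i)\<^sup>2) \<le> \<sigma>u\<^sup>2 * W * (1 - 2 * sqrt (x / n))}
      = {U\<in>space (gauss_matrix n d \<sigma>u).
              (\<Sum>i<n. (mat_vec d U w i / \<tau>)\<^sup>2) \<le> n - 2 * sqrt (n * x)}"
    using \<tau>_pos by (simp only: sum_sq_mat_vec_eq mult_le_cancel_left_pos zero_less_power)
  also have "prob \<dots> \<le> exp (- x)"
    using chi_square_lower_tail[OF finite_lessThan _ standardized_mat_vec_indep
                                standardized_mat_vec_distributed x] n_pos
    by (simp add: lessThan_empty_iff)
  finally show ?thesis .
qed

lemma cross_term_tail:
  assumes L: "L \<ge> 0"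
  shows "prob {U\<in>space (gauss_matrix n d \<sigma>u).
            \<sigma>u * sqrt (W * (\<Sum>i<n. (p i)\<^sup>2)) * sqrt (2 * L / n) < \<bar>\<Sum>i<n. mat_vec d U w i * p i\<bar>}
         \<le> exp (- L)"
proof (cases "\<forall>i<n. p i = 0")
  case True
  then show ?thesis
    by simp
next
  case False
  define P where "P = (\<Sum>i<n. (p i)\<^sup>2)"
  obtain i where "i < n" "p i \<noteq> 0"
    using False by blast
  then have "P > 0"
    unfolding P_def by (intro sum_pos2[of _ i]) auto
  have "distributed (gauss_matrix n d \<sigma>u) lborel (\<lambda>U. \<Sum>i<n. p i * mat_vec d U w i)
      (normal_density 0 (\<tau> * sqrt P))"
    unfolding P_def using False
    by (intro distributed_lincomb_indep_normal mat_vec_indep \<tau>_pos mat_vec_distributed) auto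
  then have C: "distributed (gauss_matrix n d \<sigma>u) lborel (\<lambda>U. \<Sum>i<n. mat_vec d U w i * p i)
      (normal_density 0 (\<tau> * sqrt P))"
    by (simp add: mult.commute)
  define u where "u = \<tau> * sqrt P * sqrt (2 * L)"
  have u: "u = \<sigma>u * sqrt (W * P) * sqrt (2 * L / n)"
    by (simp add: u_def \<tau>_def real_sqrt_mult real_sqrt_divide)
  have exponent: "- u\<^sup>2 / (2 * (\<tau> * sqrt P)\<^sup>2) = - L"
    using \<open>P > 0\<close> \<tau>_pos L by (simp add: u_def power_mult_distrib)
  have "prob {U\<in>space (gauss_matrix n d \<sigma>u). u < \<bar>\<Sum>i<n. mat_vec d U w i * p i\<bar>}
      \<le> prob {U\<in>space (gauss_matrix n d \<sigma>u). u \<le> \<bar>\<Sum>i<n. mat_vec d U w i * p i\<bar>}"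
    using distributed_measurable[OF C] by (intro finite_measure_mono) auto
  also have "\<dots> \<le> exp (- u\<^sup>2 / (2 * (\<tau> * sqrt P)\<^sup>2))"
    using \<open>P > 0\<close> \<tau>_pos L by (intro normal_abs_tail[OF C]) (auto simp: u_def)
  also have "\<dots> = exp (- L)"
    by (simp only: exponent)
  finally show ?thesis
    unfolding u P_def .
qed

lemma cross_term_ratio_le:
  assumes frob: "frob_norm n d Q \<le> sqrt (real d) * lam" and L: "L \<ge> 0"
    and c: "\<bar>c\<bar> \<le> \<sigma>u * sqrt (W * (\<Sum>i<n. (mat_vec d (case_prod Q) w i)\<^sup>2)) * sqrt (2 * L / n)"
  shows "\<bar>c\<bar> / W \<le> sqrt (2 * real d) * lam * sqrt (L / real n) * \<sigma>u"
proof -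
  have "sqrt (W * (\<Sum>i<n. (mat_vec d (case_prod Q) w i)\<^sup>2)) \<le> sqrt (W * ((frob_norm n d Q)\<^sup>2 * W))"
    using sum_sq_mat_vec_le_frob_norm W_pos by (intro real_sqrt_le_mono mult_left_mono) auto
  also have "\<dots> = sqrt ((frob_norm n d Q * W)\<^sup>2)"
    by (simp add: power2_eq_square mult_ac)
  also have "\<dots> = frob_norm n d Q * W"
    using W_pos frob_norm_nonneg by simp
  also have "\<dots> \<le> sqrt (real d) * lam * W"
    using frob W_pos by simp
  finally have "\<sigma>u * sqrt (W * (\<Sum>i<n. (mat_vec d (case_prod Q) w i)\<^sup>2)) * sqrt (2 * L / n)
      \<le> \<sigma>u * (sqrt (real d) * lam * W) * sqrt (2 * L / n)"
    using \<sigma>u_pos L by (intro mult_right_mono mult_left_mono) auto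
  also have "\<dots> = sqrt (2 * real d) * lam * sqrt (L / real n) * \<sigma>u * W"
    by (simp add: real_sqrt_mult real_sqrt_divide)
  finally show ?thesis
    using c W_pos by (simp add: divide_le_eq)
qed

lemma Delta0_measurable[measurable]: "Delta0 n d Q w \<in> borel_measurable (gauss_matrix n d \<sigma>u)"
  unfolding Delta0_eq_mat_vec[abs_def] by measurable

definition typical_event :: "(nat \<Rightarrow> nat \<Rightarrow> real) \<Rightarrow> real \<Rightarrow> real \<Rightarrow> (nat \<times> nat \<Rightarrow> real) set" where
  "typical_event Q x L = {U \<in> space (gauss_matrix n d \<sigma>u).
     \<sigma>u\<^sup>2 * W * (1 - 2 * sqrt (x / n)) < (\<Sum>i<n. (mat_vec d U w i)\<^sup>2)
     \<and> (\<Sum>i<n. (mat_vec d U w i)\<^sup>2) < \<sigma>u\<^sup>2 * W * (1 + 2 * sqrt (x / n) + 2 * (x / n))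
     \<and> \<bar>\<Sum>i<n. mat_vec d U w i * mat_vec d (case_prod Q) w i\<bar>
         \<le> \<sigma>u * sqrt (W * (\<Sum>i<n. (mat_vec d (case_prod Q) w i)\<^sup>2)) * sqrt (2 * L / n)}"

lemma prob_typical_event:
  assumes "x > 0" "L \<ge> 0"
  shows "1 - (2 * exp (- x) + exp (- L)) \<le> prob (typical_event Q x L)"
proof -
  let ?p = "mat_vec d (case_prod Q) w"
  define B\<^sub>1 where "B\<^sub>1 = {U\<in>space (gauss_matrix n d \<sigma>u).
    \<sigma>u\<^sup>2 * W * (1 + 2 * sqrt (x / n) + 2 * (x / n)) \<le> (\<Sum>i<n. (mat_vec d U w i)\<^sup>2)}"
  define B\<^sub>2 where "B\<^sub>2 = {U\<in>space (gauss_matrix n d \<sigma>u).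
    (\<Sum>i<n. (mat_vec d U w i)\<^sup>2) \<le> \<sigma>u\<^sup>2 * W * (1 - 2 * sqrt (x / n))}"
  define B\<^sub>3 where "B\<^sub>3 = {U\<in>space (gauss_matrix n d \<sigma>u).
    \<sigma>u * sqrt (W * (\<Sum>i<n. (?p i)\<^sup>2)) * sqrt (2 * L / n) < \<bar>\<Sum>i<n. mat_vec d U w i * ?p i\<bar>}"
  have "B\<^sub>1 \<in> events" "B\<^sub>2 \<in> events" "B\<^sub>3 \<in> events" "typical_event Q x L \<in> events"
    unfolding B\<^sub>1_def B\<^sub>2_def B\<^sub>3_def typical_event_def by measurable
  moreover have "space (gauss_matrix n d \<sigma>u) - (B\<^sub>1 \<union> B\<^sub>2 \<union> B\<^sub>3) \<subseteq> typical_event Q x L"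
    by (auto simp: B\<^sub>1_def B\<^sub>2_def B\<^sub>3_def typical_event_def)
  ultimately have "1 - (prob B\<^sub>1 + prob B\<^sub>2 + prob B\<^sub>3) \<le> prob (typical_event Q x L)"
    by (rule prob_ge_one_minus_union_bound)
  moreover have "prob B\<^sub>1 \<le> exp (- x)" "prob B\<^sub>2 \<le> exp (- x)" "prob B\<^sub>3 \<le> exp (- L)"
    unfolding B\<^sub>1_def B\<^sub>2_def B\<^sub>3_def
    by (rule sum_sq_mat_vec_upper_tail[OF assms(1)] sum_sq_mat_vec_lower_tail[OF assms(1)]
        cross_term_tail[OF assms(2)])+
  ultimately show ?thesis
    by linarith
qed

lemma Delta0_bounds_on_typical_event:
  assumes frob: "frob_norm n d Q \<le> sqrt (real d) * lam" and lam: "lam \<ge> 0" and L: "L \<ge> 0"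
    and c\<^sub>0: "c\<^sub>0 \<ge> 0" and a: "1 - 2 * sqrt (x / n) > 0"
    and \<sigma>u_ge: "(sqrt (2 * real d) * lam * sqrt (L / n)
              + sqrt (2 * real d * lam\<^sup>2 * (L / n) + c\<^sub>0 * (1 - 2 * sqrt (x / n))))
            / (1 - 2 * sqrt (x / n)) \<le> \<sigma>u"
    and U: "U \<in> typical_event Q x L"
  shows "c\<^sub>0 \<le> Delta0 n d Q w U"
    and "Delta0 n d Q w U \<le> \<sigma>u\<^sup>2 * (1 + 2 * sqrt (x / n) + 2 * (x / n))
                              + 2 * sqrt (2 * real d) * lam * \<sigma>u * sqrt (L / n)"
proof -
  define b where "b = sqrt (2 * real d) * lam * sqrt (L / n)"
  have b: "b \<ge> 0" "b\<^sup>2 = 2 * real d * lam\<^sup>2 * (L / n)"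
    using lam L by (simp_all add: b_def power_mult_distrib)
  have cross: "\<bar>\<Sum>i<n. mat_vec d U w i * mat_vec d (case_prod Q) w i\<bar> / W \<le> b * \<sigma>u"
    unfolding b_def using U L by (intro cross_term_ratio_le[OF frob]) (simp_all add: typical_event_def)
  from U have "\<sigma>u\<^sup>2 * W * (1 - 2 * sqrt (x / n)) \<le> (\<Sum>i<n. (mat_vec d U w i)\<^sup>2)"
    "(\<Sum>i<n. (mat_vec d U w i)\<^sup>2) \<le> \<sigma>u\<^sup>2 * W * (1 + 2 * sqrt (x / n) + 2 * (x / n))"
    by (simp_all add: typical_event_def)
  note bounds = bounds_of_quadratic_and_cross_term[OF W_pos a b(1) c\<^sub>0 \<sigma>u_ge[folded b(2) b_def] this cross]
  show "c\<^sub>0 \<le> Delta0 n d Q w U"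
    using bounds(1) by (simp add: Delta0_eq_mat_vec)
  show "Delta0 n d Q w U \<le> \<sigma>u\<^sup>2 * (1 + 2 * sqrt (x / n) + 2 * (x / n))
                              + 2 * sqrt (2 * real d) * lam * \<sigma>u * sqrt (L / n)"
    using bounds(2) by (simp add: Delta0_eq_mat_vec b_def mult_ac)
qed

end

theorem corollary2:
  fixes n d :: nat and lam \<sigma>u \<gamma> \<epsilon> :: real
    and Q :: "nat \<Rightarrow> nat \<Rightarrow> real" and w :: "nat \<Rightarrow> real"
  assumes "lam > 0" "\<sigma>u > 0" "n > 0" "d > 0"
    and "0 < \<gamma>" "\<gamma> \<le> 1"
    and "1 - 2 * sqrt (ln (4 / \<gamma>) / real n) > 0"
    and "\<epsilon> > 0"
    and "frob_norm n d Q \<le> sqrt (real d) * lam"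
    and "\<exists>j<d. w j \<noteq> 0"
    and "\<sigma>u \<ge> (sqrt (2 * real d) * lam * sqrt (ln (2 / \<gamma>) / real n)
                 + sqrt (2 * real d * lam\<^sup>2 * (ln (2 / \<gamma>) / real n)
                         + (2 * lam / \<epsilon>) * (1 - 2 * sqrt (ln (4 / \<gamma>) / real n))))
               / (1 - 2 * sqrt (ln (4 / \<gamma>) / real n))"
  shows "measure (gauss_matrix n d \<sigma>u)
           {U \<in> space (gauss_matrix n d \<sigma>u).
              2 * lam / \<epsilon> \<le> Delta0 n d Q w U \<and> Delta0 n d Q w U \<le> kappa n d lam \<sigma>u \<gamma>}
         \<ge> 1 - \<gamma>"
proof -
  interpret gauss_matrix_setting n d \<sigma>u w
    using assms by unfold_locales auto
  define x L where "x = ln (4 / \<gamma>)" and "L = ln (2 / \<gamma>)"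
  have "x > 0" "exp (- x) = \<gamma> / 4" "L > 0" "exp (- L) = \<gamma> / 2"
    using assms(5,6) by (simp_all add: x_def L_def exp_minus)
  then have "1 - \<gamma> \<le> prob (typical_event Q x L)"
    using prob_typical_event[of x L Q] by simp
  also have "\<dots> \<le> prob {U \<in> space (gauss_matrix n d \<sigma>u).
      2 * lam / \<epsilon> \<le> Delta0 n d Q w U \<and> Delta0 n d Q w U \<le> kappa n d lam \<sigma>u \<gamma>}"
  proof (intro finite_measure_mono subsetI CollectI conjI)
    fix U assume "U \<in> typical_event Q x L"
    note bounds = Delta0_bounds_on_typical_event[OF assms(9) _ _ _ _ _ this]
    show "U \<in> space (gauss_matrix n d \<sigma>u)"
      using \<open>U \<in> typical_event Q x L\<close> by (simp add: typical_event_def)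
    show "2 * lam / \<epsilon> \<le> Delta0 n d Q w U" "Delta0 n d Q w U \<le> kappa n d lam \<sigma>u \<gamma>"
      using bounds[of "2 * lam / \<epsilon>"] assms \<open>L > 0\<close> by (simp_all add: kappa_def x_def L_def)
  qed measurable
  finally show ?thesis .
qed

end
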